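(* Fix a constant $c\ge 10$. Consider the random pairwise load balancing process on $n\ge2$ nodes, where tokens are moved in skip mode. Let $t$ be a time step and condition on any history up to time $t$ for which $t\ge T_1$. Let $b$ be a token whose normalized height satisfies $\hat h_b(t)>2c$. Then, conditionally on this history, with probability at least $1/n$ we have $\hat h_b(t+1)\le \frac{17}{20}\,\hat h_b(t)$.
   Context: Random pairwise load balancing process: $n$ nodes, $m$ tokens, load vector $\ell(t)\in\mathbb{Z}^n$. In each time step $t$, independently, an ordered pair $(u,v)$ of distinct nodes is chosen uniformly at random and loads become $\ell_u(t+1)=\lceil(\ell_u(t)+\ell_v(t))/2\rceil$, $\ell_v(t+1)=\lfloor(\ell_u(t)+\ell_v(t))/2\rfloor$. Average load $\varnothing=m/n$, $\mathrm{round}(\varnothing)$ is $\varnothing$ rounded to the nearest integer, and $\Phi(\ell)=\sum_i(\ell_i-\varnothing)^2$. $T_1$ is the first time $t$ with $\Phi(\ell(t))<n$. For the analysis, tokens on each node are kept in a linear (stack) order; the height $h_b(t)$ of token $b$ is the number of tokens preceding (below) $b$ on its node, and the normalized height is $\hat h_b(t)=h_b(t)-\mathrm{round}(\varnothing)$. Skip mode: when $k$ tokens must move from the node with larger load to the node with smaller load, the moved tokens are chosen starting from the topmost token of the larger node and taking every second token downward (top, third from top, fifth from top, …) until $k$ tokens are selected; these are then placed on top of the receiving node in their original relative order, and the remaining tokens of the larger node keep their relative order. *)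

theory Defs
  imports Complex_Main
begin

text \<open>Nodes are 0..<n. A configuration maps each node to its stack of tokens,
  listed from bottom to top. The load of node i is the length of its stack.\<close>

type_synonym 'tok config = "nat \<Rightarrow> 'tok list"

definition wf_config :: "nat \<Rightarrow> 'tok config \<Rightarrow> bool" where
  "wf_config n s \<longleftrightarrow> (\<forall>i<n. distinct (s i)) \<and>
     (\<forall>i<n. \<forall>j<n. i \<noteq> j \<longrightarrow> set (s i) \<inter> set (s j) = {})"

text \<open>Skip mode: from a stack of length len, the k selected tokens are the top one,
  the third from top, the fifth from top, ... (indices counted from the bottom).\<close>
definition skip_sel :: "nat \<Rightarrow> nat \<Rightarrow> nat set" where
  "skip_sel len k = {j. j < len \<and> len - 1 - j < 2 * k \<and> even (len - 1 - j)}"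

text \<open>One balancing step on the ordered pair (u,v): u gets the ceiling, v the floor.\<close>
definition step :: "'tok config \<Rightarrow> nat \<times> nat \<Rightarrow> 'tok config" where
  "step s p = (case p of (u, v) \<Rightarrow>
     let a = length (s u); b = length (s v) in
     if b \<le> a then
       (let k = (a - b) div 2; S = skip_sel a k in
        s(u := nths (s u) (- S), v := s v @ nths (s u) S))
     else
       (let k = (b - a + 1) div 2; S = skip_sel b k in
        s(v := nths (s v) (- S), u := s u @ nths (s v) S)))"

definition Phi :: "nat \<Rightarrow> nat \<Rightarrow> 'tok config \<Rightarrow> real" where
  "Phi n m s = (\<Sum>i<n. (real (length (s i)) - real m / real n)\<^sup>2)"

definition node_of :: "nat \<Rightarrow> 'tok config \<Rightarrow> 'tok \<Rightarrow> nat" where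
  "node_of n s b = (THE i. i < n \<and> b \<in> set (s i))"

definition height :: "nat \<Rightarrow> 'tok config \<Rightarrow> 'tok \<Rightarrow> nat" where
  "height n s b = length (takeWhile (\<lambda>x. x \<noteq> b) (s (node_of n s b)))"

definition nheight :: "nat \<Rightarrow> nat \<Rightarrow> 'tok config \<Rightarrow> 'tok \<Rightarrow> int" where
  "nheight n m s b = int (height n s b) - round (real m / real n)"

definition pairs :: "nat \<Rightarrow> (nat \<times> nat) set" where
  "pairs n = {(u, v). u < n \<and> v < n \<and> u \<noteq> v}"

end

theory Submission
  imports Defs
begin

text \<open>Skip mode halves the tokens above a token b: whether b moves to the lighter partner v
  or stays, its new height is at most (h + l_v + 1)/2, where h is its old height and l_v the
  load of v. Since the potential never increases, Phi < n still holds at time t, so fewer than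
  n/182 nodes have load above round(m/n) + 13. Pairing the node of b with any other, lighter node,
  in either order, therefore lowers the normalized height of b to at most 17/20 of its value once
  that exceeds 20; this gives at least n - 1 good ordered pairs out of n(n - 1).\<close>

definition skip_move :: "'tok config \<Rightarrow> nat \<Rightarrow> nat \<Rightarrow> nat \<Rightarrow> 'tok config" where
  "skip_move s x y k =
     (let S = skip_sel (length (s x)) k in s(x := nths (s x) (- S), y := s y @ nths (s x) S))"

lemma skip_move_apply [simp]:
  "x \<noteq> y \<Longrightarrow> skip_move s x y k x = nths (s x) (- skip_sel (length (s x)) k)"
  "skip_move s x y k y = s y @ nths (s x) (skip_sel (length (s x)) k)"
  "i \<noteq> x \<Longrightarrow> i \<noteq> y \<Longrightarrow> skip_move s x y k i = s i"
  by (simp_all add: skip_move_def Let_def)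

lemma step_eq_skip_move:
  assumes "length (s v) \<le> length (s u)"
  shows "step s (u, v) = skip_move s u v ((length (s u) - length (s v)) div 2)"
  using assms by (simp add: step_def skip_move_def Let_def)

lemma step_swap_eq_skip_move:
  assumes "length (s v) < length (s u)"
  shows "step s (v, u) = skip_move s u v ((length (s u) - length (s v) + 1) div 2)"
  using assms by (auto simp: step_def skip_move_def Let_def fun_upd_twist)

lemma step_cases:
  assumes "p \<in> pairs n"
  obtains x y k where "x < n" "y < n" "x \<noteq> y" "length (s y) \<le> length (s x)"
    "2 * k + length (s y) \<le> length (s x) + 1"
    "step s p = skip_move s x y k"
proof -
  obtain u v where p: "p = (u, v)" "u < n" "v < n" "u \<noteq> v"
    using assms by (auto simp: pairs_def)
  show ?thesis
  proof (cases "length (s v) \<le> length (s u)")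
    case True
    then show ?thesis using p that[of u v "(length (s u) - length (s v)) div 2"]
      by (simp add: step_eq_skip_move)
  next
    case False
    then show ?thesis using p that[of v u "(length (s v) - length (s u) + 1) div 2"]
      by (simp add: step_swap_eq_skip_move)
  qed
qed

lemma card_skip_sel_le: "card (skip_sel a k) \<le> k"
proof -
  have "skip_sel a k \<subseteq> (\<lambda>i. a - 1 - 2 * i) ` {..<k}"
  proof
    fix j assume "j \<in> skip_sel a k"
    then have j: "j < a" "a - 1 - j < 2 * k" "even (a - 1 - j)" by (auto simp: skip_sel_def)
    show "j \<in> (\<lambda>i. a - 1 - 2 * i) ` {..<k}"
      by (rule image_eqI[where x="(a - 1 - j) div 2"]) (use j in auto)
  qed
  then have "card (skip_sel a k) \<le> card ((\<lambda>i. a - 1 - 2 * i) ` {..<k})"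
    by (intro card_mono) auto
  also have "\<dots> \<le> k" using card_image_le[of "{..<k}"] by simp
  finally show ?thesis .
qed

lemma skip_sel_below_eq_image:
  assumes "h < a" "2 * k \<le> a + 1"
  shows "{j \<in> skip_sel a k. j < h} = (\<lambda>i. a - 1 - 2 * i) ` {Suc ((a - 1 - h) div 2)..<k}"
    (is "?L = ?f ` ?I")
proof
  show "?L \<subseteq> ?f ` ?I"
  proof
    fix j assume "j \<in> ?L"
    then have j: "j < a" "a - 1 - j < 2 * k" "even (a - 1 - j)" "j < h"
      by (auto simp: skip_sel_def)
    then obtain i where i: "a - 1 - j = 2 * i" by blast
    have "j = a - 1 - 2 * i" "i < k" using i j(1,2) by linarith+
    moreover have "a - 1 - h < i * 2" using i j(1,4) assms(1) by linarith
    then have "Suc ((a - 1 - h) div 2) \<le> i" by (simp add: Suc_leI less_mult_imp_div_less)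
    ultimately show "j \<in> ?f ` ?I" by auto
  qed
next
  show "?f ` ?I \<subseteq> ?L"
  proof
    fix j assume "j \<in> ?f ` ?I"
    then obtain i where i: "Suc ((a - 1 - h) div 2) \<le> i" "i < k" "j = a - 1 - 2 * i" by auto
    have "a - 1 - j = 2 * i" "2 * i > a - 1 - h" using i assms by linarith+
    then show "j \<in> ?L" using i assms unfolding skip_sel_def by auto
  qed
qed

lemma card_skip_sel_below:
  assumes "h < a" "2 * k \<le> a + 1"
  shows "card {j \<in> skip_sel a k. j < h} = k - Suc ((a - 1 - h) div 2)"
proof -
  have "inj_on (\<lambda>i. a - 1 - 2 * i) {Suc ((a - 1 - h) div 2)..<k}"
    using assms by (auto simp: inj_on_def)
  then show ?thesis by (simp add: skip_sel_below_eq_image[OF assms] card_image)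
qed

lemma card_below_Compl: "card {j \<in> - S. j < h} = h - card {j \<in> S. j < (h::nat)}"
proof -
  have "{j \<in> - S. j < h} = {..<h} - {j \<in> S. j < h}" by auto
  then show ?thesis by (simp only:) (subst card_Diff_subset, auto)
qed

lemma length_takeWhile_neq_less: "b \<in> set xs \<Longrightarrow> length (takeWhile (\<lambda>x. x \<noteq> b) xs) < length xs"
  by (induct xs) auto

lemma length_takeWhile_nths:
  assumes "distinct xs" "h < length xs" "xs ! h = b" "h \<in> S"
  shows "length (takeWhile (\<lambda>x. x \<noteq> b) (nths xs S)) = card {j \<in> S. j < h}"
proof -
  have xs: "xs = take h xs @ b # drop (Suc h) xs" using assms id_take_nth_drop by metis
  with assms(1) have "b \<notin> set (take h xs)" by (metis distinct_append disjoint_iff list.set_intros(1))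
  then have "\<forall>x\<in>set (nths (take h xs) S). x \<noteq> b" using in_set_nthsD by fastforce
  moreover have "nths xs S = nths (take h xs) S @ b # nths (drop (Suc h) xs) {j. Suc j + h \<in> S}"
    using assms(2,4) by (subst xs) (simp add: nths_append nths_Cons min_def)
  ultimately have "takeWhile (\<lambda>x. x \<noteq> b) (nths xs S) = nths (take h xs) S"
    by simp
  moreover have "{i. i < h \<and> i \<in> S} = {j \<in> S. j < h}" by auto
  ultimately show ?thesis using assms(2) by (simp add: length_nths min_def)
qed

lemma node_of_eqI:
  assumes "wf_config n s" "i < n" "b \<in> set (s i)"
  shows "node_of n s b = i"
  unfolding node_of_def
proof (rule the_equality)
  show "i < n \<and> b \<in> set (s i)" using assms by simp
  fix j assume "j < n \<and> b \<in> set (s j)"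
  then show "j = i" using assms unfolding wf_config_def by blast
qed

lemma height_less_length:
  assumes "wf_config n s" "u < n" "b \<in> set (s u)"
  shows "height n s b < length (s u)"
  using assms by (simp add: height_def node_of_eqI length_takeWhile_neq_less)

lemma disjoint_move_sublists:
  fixes s :: "'tok config"
  assumes dj: "\<And>i j. i < n \<Longrightarrow> j < n \<Longrightarrow> i \<noteq> j \<Longrightarrow> set (s i) \<inter> set (s j) = {}"
    and xy: "x < n" "y < n" "x \<noteq> y"
    and AB: "set A \<subseteq> set (s x)" "set B \<subseteq> set (s x)" "set A \<inter> set B = {}"
    and ij: "i < n" "j < n" "i \<noteq> j"
  shows "set ((s(x := B, y := s y @ A)) i) \<inter> set ((s(x := B, y := s y @ A)) j) = {}"
proof -
  define s' where "s' = s(x := B, y := s y @ A)"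
  have moved: "set (s' x) \<inter> set (s' y) = {}"
    using dj[OF xy] AB xy(3) unfolding s'_def by auto
  have untouched: "set (s' k) \<inter> set (s' x) = {}" "set (s' k) \<inter> set (s' y) = {}"
    if "k < n" "k \<noteq> x" "k \<noteq> y" for k
    using that dj[of k x] dj[of k y] xy AB unfolding s'_def by auto
  have "set (s' i) \<inter> set (s' j) = {}"
  proof (cases "i \<in> {x, y}"; cases "j \<in> {x, y}")
    assume "i \<notin> {x, y}" "j \<notin> {x, y}"
    then show ?thesis using dj[OF ij] unfolding s'_def by simp
  qed (use ij moved untouched[of i] untouched[of j] in \<open>auto simp: Int_commute\<close>)
  then show ?thesis unfolding s'_def .
qed
lemma wf_config_skip_move:
  assumes "wf_config n s" "x < n" "y < n" "x \<noteq> y"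
  shows "wf_config n (skip_move s x y k)"
proof -
  define S where "S = skip_sel (length (s x)) k"
  have d: "\<And>i. i < n \<Longrightarrow> distinct (s i)"
    and dj: "\<And>i j. i < n \<Longrightarrow> j < n \<Longrightarrow> i \<noteq> j \<Longrightarrow> set (s i) \<inter> set (s j) = {}"
    using assms(1) unfolding wf_config_def by auto
  have sub: "set (nths (s x) S) \<subseteq> set (s x)" "set (nths (s x) (- S)) \<subseteq> set (s x)"
    by (rule set_nths_subset)+
  have dis: "set (nths (s x) S) \<inter> set (nths (s x) (- S)) = {}"
    using d[OF assms(2)] by (auto simp: set_nths nth_eq_iff_index_eq)
  show ?thesis unfolding wf_config_def skip_move_def Let_def S_def[symmetric]
  proof (intro conjI allI impI)
    fix i assume "i < n"
    then show "distinct ((s(x := nths (s x) (- S), y := s y @ nths (s x) S)) i)"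
      using d[of i] d[OF assms(2)] d[OF assms(3)] dj[OF assms(2,3,4)] sub by auto
  next
    fix i j assume "i < n" "j < n" "i \<noteq> j"
    with dj assms(2-4) sub dis
    show "set ((s(x := nths (s x) (- S), y := s y @ nths (s x) S)) i) \<inter>
      set ((s(x := nths (s x) (- S), y := s y @ nths (s x) S)) j) = {}"
      by (rule disjoint_move_sublists)
  qed
qed

lemma wf_config_step:
  assumes "wf_config n s" "p \<in> pairs n"
  shows "wf_config n (step s p)"
proof -
  obtain x y k where "x < n" "y < n" "x \<noteq> y" "step s p = skip_move s x y k"
    using step_cases[OF assms(2), of s] by metis
  then show ?thesis using assms(1) by (simp add: wf_config_skip_move)
qed

lemma length_skip_move:
  assumes "x \<noteq> y"
  shows "length (skip_move s x y k x) = length (s x) - card (skip_sel (length (s x)) k)"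
    and "length (skip_move s x y k y) = length (s y) + card (skip_sel (length (s x)) k)"
proof -
  have "{i. i < length (s x) \<and> i \<in> skip_sel (length (s x)) k} = skip_sel (length (s x)) k"
    by (auto simp: skip_sel_def)
  moreover have "card {i. i < l \<and> i \<notin> S} = l - card {i. i < l \<and> i \<in> S}" for l and S :: "nat set"
    using card_below_Compl[of S l] by (simp add: conj_commute)
  ultimately show "length (skip_move s x y k x) = length (s x) - card (skip_sel (length (s x)) k)"
    "length (skip_move s x y k y) = length (s y) + card (skip_sel (length (s x)) k)"
    using assms by (simp_all add: length_nths)
qed

subsection \<open>The potential does not increase\<close>

lemma sum_squares_transfer_le:
  fixes X Y q \<mu> :: real
  assumes "0 \<le> q" "q \<le> X - Y"
  shows "(X - q - \<mu>)\<^sup>2 + (Y + q - \<mu>)\<^sup>2 \<le> (X - \<mu>)\<^sup>2 + (Y - \<mu>)\<^sup>2"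
proof -
  have "(X - q - \<mu>)\<^sup>2 + (Y + q - \<mu>)\<^sup>2 = (X - \<mu>)\<^sup>2 + (Y - \<mu>)\<^sup>2 - 2 * (q * ((X - Y) - q))"
    by (simp add: power2_eq_square algebra_simps)
  moreover have "0 \<le> q * ((X - Y) - q)" using assms by simp
  ultimately show ?thesis by linarith
qed

lemma Phi_transfer_le:
  assumes "x < n" "y < n" "x \<noteq> y" "q + length (s y) \<le> length (s x)"
    "length (s' x) = length (s x) - q" "length (s' y) = length (s y) + q"
    "\<And>i. i \<noteq> x \<Longrightarrow> i \<noteq> y \<Longrightarrow> s' i = s i"
  shows "Phi n m s' \<le> Phi n m s"
proof -
  define g where "g t i = (real (length (t i)) - real m / real n)\<^sup>2" for t :: "'a config" and i
  have split: "Phi n m t = g t x + g t y + (\<Sum>i\<in>{..<n} - {x} - {y}. g t i)" for t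
    using assms(1-3) unfolding Phi_def g_def
    by (simp add: sum.remove[of "{..<n}" x] sum.remove[of "{..<n} - {x}" y])
  have "(\<Sum>i\<in>{..<n} - {x} - {y}. g s' i) = (\<Sum>i\<in>{..<n} - {x} - {y}. g s i)"
    using assms(7) by (intro sum.cong) (auto simp: g_def)
  moreover have "g s' x + g s' y \<le> g s x + g s y"
    unfolding g_def assms(5,6) using assms(4) by (simp add: sum_squares_transfer_le)
  ultimately show ?thesis using split[of s] split[of s'] by linarith
qed

lemma Phi_step_le:
  assumes "p \<in> pairs n"
  shows "Phi n m (step s p) \<le> Phi n m s"
proof -
  obtain x y k where xy: "x < n" "y < n" "x \<noteq> y" "length (s y) \<le> length (s x)"
    "2 * k + length (s y) \<le> length (s x) + 1" and p: "step s p = skip_move s x y k"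
    using step_cases[OF assms, of s] by metis
  have "card (skip_sel (length (s x)) k) + length (s y) \<le> length (s x)"
    using card_skip_sel_le[of "length (s x)" k] xy(4,5) by linarith
  then show ?thesis unfolding p
    by (rule Phi_transfer_le[OF xy(1-3) _ length_skip_move[OF xy(3)]]) simp
qed

subsection \<open>Height of a token after a step\<close>

lemma height_skip_move:
  fixes s :: "'tok config" and k :: nat
  assumes wf: "wf_config n s" and xy: "x < n" "y < n" "x \<noteq> y" and bx: "b \<in> set (s x)"
  defines "h \<equiv> height n s b" and "S \<equiv> skip_sel (length (s x)) k"
  shows "height n (skip_move s x y k) b =
    (if h \<in> S then length (s y) + card {j \<in> S. j < h} else h - card {j \<in> S. j < h})"
proof -
  have wf': "wf_config n (skip_move s x y k)" using wf_config_skip_move[OF wf xy] .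
  have dx: "distinct (s x)" and disj: "set (s y) \<inter> set (s x) = {}"
    using wf xy unfolding wf_config_def by auto
  have h: "h = length (takeWhile (\<lambda>z. z \<noteq> b) (s x))"
    using node_of_eqI[OF wf xy(1) bx] unfolding h_def height_def by simp
  have hx: "h < length (s x)" unfolding h using bx by (rule length_takeWhile_neq_less)
  have xh: "s x ! h = b" unfolding h using bx nth_length_takeWhile hx h by fastforce
  show ?thesis
  proof (cases "h \<in> S")
    case True
    have "b \<in> set (skip_move s x y k y)" using hx xh True by (auto simp: set_nths S_def)
    then have "node_of n (skip_move s x y k) b = y" using node_of_eqI[OF wf' xy(2)] by simp
    moreover have "\<forall>z\<in>set (s y). z \<noteq> b" using disj bx by auto
    ultimately have "height n (skip_move s x y k) b
        = length (s y) + length (takeWhile (\<lambda>z. z \<noteq> b) (nths (s x) S))"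
      unfolding height_def S_def by simp
    then show ?thesis using length_takeWhile_nths[OF dx hx xh True] True by simp
  next
    case False
    have "b \<in> set (skip_move s x y k x)" using hx xh False xy(3) by (auto simp: set_nths S_def)
    then have "node_of n (skip_move s x y k) b = x" using node_of_eqI[OF wf' xy(1)] by simp
    then have "height n (skip_move s x y k) b = length (takeWhile (\<lambda>z. z \<noteq> b) (nths (s x) (- S)))"
      unfolding height_def S_def using xy(3) by simp
    then show ?thesis using length_takeWhile_nths[OF dx hx xh] False card_below_Compl by simp
  qed
qed

text \<open>With d = a - 1 - h tokens above b on a stack of load a, the k moved tokens are those at
  distance 0, 2, ..., 2k - 2 below the top; so b moves iff d is even, and exactly
  k - (d div 2 + 1) of the moved tokens lie below b.\<close>

lemma height_skip_move_le:
  fixes s :: "'tok config"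
  assumes wf: "wf_config n s" and xy: "x < n" "y < n" "x \<noteq> y" and bx: "b \<in> set (s x)"
    and k: "length (s x) \<le> length (s y) + 1 + 2 * k" "2 * k + length (s y) \<le> length (s x) + 1"
    and hb: "length (s y) < height n s b"
  shows "2 * height n (skip_move s x y k) b \<le> height n s b + length (s y) + 1"
proof -
  define a where "a = length (s x)"
  define h where "h = height n s b"
  define d where "d = a - 1 - h"
  have ha: "h < a" unfolding h_def a_def by (rule height_less_length[OF wf xy(1) bx])
  have below: "card {j \<in> skip_sel a k. j < h} = k - Suc (d div 2)"
    unfolding d_def using card_skip_sel_below[OF ha] k unfolding a_def by simp
  have dk: "d < 2 * k" unfolding d_def a_def h_def using k hb ha[unfolded a_def h_def] by linarith
  show ?thesis
  proof (cases "h \<in> skip_sel a k")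
    case True
    then have "even d" using ha unfolding skip_sel_def d_def by auto
    then obtain e where "d = 2 * e" by blast
    then show ?thesis using True height_skip_move[OF wf xy bx, of k] below dk k ha
      unfolding a_def h_def d_def by simp
  next
    case False
    then have "odd d" using ha dk unfolding skip_sel_def d_def by auto
    then obtain e where "d = 2 * e + 1" using oddE by blast
    then show ?thesis using False height_skip_move[OF wf xy bx, of k] below dk k ha
      unfolding a_def h_def d_def by simp
  qed
qed

lemma height_step_le:
  fixes s :: "'tok config"
  assumes wf: "wf_config n s" and uv: "u < n" "v < n" "u \<noteq> v" and bu: "b \<in> set (s u)"
    and hb: "length (s v) < height n s b" and p: "p \<in> {(u, v), (v, u)}"
  shows "2 * height n (step s p) b \<le> height n s b + length (s v) + 1"
proof -
  have vu: "length (s v) < length (s u)"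
    using hb height_less_length[OF wf uv(1) bu] by linarith
  have "step s p = skip_move s u v ((length (s u) - length (s v)) div 2) \<or>
      step s p = skip_move s u v ((length (s u) - length (s v) + 1) div 2)"
    using p vu step_eq_skip_move[of s v u] step_swap_eq_skip_move[of s v u] by auto
  then show ?thesis
    using height_skip_move_le[OF wf uv bu _ _ hb] vu by (elim disjE) simp_all
qed

lemma nheight_step_le:
  fixes s :: "'tok config"
  assumes wf: "wf_config n s" and uv: "u < n" "v < n" "u \<noteq> v" and bu: "b \<in> set (s u)"
    and high: "21 \<le> nheight n m s b"
    and light: "int (length (s v)) \<le> round (real m / real n) + 13"
    and p: "p \<in> {(u, v), (v, u)}"
  shows "real_of_int (nheight n m (step s p) b) \<le> 17 / 20 * real_of_int (nheight n m s b)"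
proof -
  define R where "R = round (real m / real n)"
  have "length (s v) < height n s b" using high light unfolding nheight_def by linarith
  then have "int (2 * height n (step s p) b) \<le> int (height n s b + length (s v) + 1)"
    using height_step_le[OF wf uv bu _ p] by (simp only: of_nat_le_iff)
  then have "20 * nheight n m (step s p) b \<le> 17 * nheight n m s b"
    using high light unfolding nheight_def R_def[symmetric] by simp
  then show ?thesis by linarith
qed

subsection \<open>Counting good pairs\<close>

lemma finite_pairs: "finite (pairs n)"
  by (rule finite_subset[of _ "{..<n} \<times> {..<n}"]) (auto simp: pairs_def)

lemma card_pairs: "card (pairs n) = n * (n - 1)"
proof -
  have "pairs n = Sigma {..<n} (\<lambda>u. {..<n} - {u})" by (auto simp: pairs_def)
  then have "card (pairs n) = (\<Sum>u<n. card ({..<n} - {u}))" by simp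
  also have "\<dots> = (\<Sum>u<n. n - 1)" by (intro sum.cong) auto
  finally show ?thesis by simp
qed

lemma card_heavy_nodes_le:
  "182 * real (card {v. v < n \<and> round (real m / real n) + 13 < int (length (s v))}) \<le> Phi n m s"
proof -
  define B where "B = {v. v < n \<and> round (real m / real n) + 13 < int (length (s v))}"
  have "182 * real (card B) = (\<Sum>v\<in>B. 182)" by simp
  also have "\<dots> \<le> (\<Sum>v\<in>B. (real (length (s v)) - real m / real n)\<^sup>2)"
  proof (rule sum_mono)
    fix v assume "v \<in> B"
    then have "round (real m / real n) + 14 \<le> int (length (s v))" by (simp add: B_def)
    then have "real_of_int (round (real m / real n)) + 14 \<le> real (length (s v))" by linarith
    then have "13.5 \<le> real (length (s v)) - real m / real n"
      using of_int_round_ge[of "real m / real n"] by linarith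
    then have "13.5 * 13.5 \<le> (real (length (s v)) - real m / real n)\<^sup>2"
      unfolding power2_eq_square by (intro mult_mono) auto
    then show "182 \<le> (real (length (s v)) - real m / real n)\<^sup>2" by linarith
  qed
  also have "\<dots> \<le> Phi n m s"
    unfolding Phi_def by (rule sum_mono2) (auto simp: B_def)
  finally show ?thesis unfolding B_def .
qed

lemma card_good_pairs_ge:
  fixes s :: "'tok config"
  assumes wf: "wf_config n s" and phi: "Phi n m s < real n"
    and bu: "u < n" "b \<in> set (s u)" and high: "21 \<le> nheight n m s b"
  shows "n - 1 \<le> card {p \<in> pairs n.
    real_of_int (nheight n m (step s p) b) \<le> 17 / 20 * real_of_int (nheight n m s b)}"
    (is "_ \<le> card ?G")
proof -
  define B where "B = {v. v < n \<and> round (real m / real n) + 13 < int (length (s v))}"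
  define V where "V = {..<n} - B"
  have "int (height n s b) < int (length (s u))" using height_less_length[OF wf bu] by simp
  then have "u \<in> B" using high bu(1) unfolding B_def nheight_def by simp
  then have V: "V \<subseteq> {..<n} - {u}" "card V = n - card B"
    unfolding V_def by (auto, subst card_Diff_subset) (auto simp: B_def)
  have "(\<lambda>v. (u, v)) ` V \<union> (\<lambda>v. (v, u)) ` V \<subseteq> ?G"
    using nheight_step_le[OF wf bu(1) _ _ bu(2) high] V(1) bu(1)
    unfolding V_def B_def pairs_def by fastforce
  then have "card ((\<lambda>v. (u, v)) ` V \<union> (\<lambda>v. (v, u)) ` V) \<le> card ?G"
    using finite_pairs by (intro card_mono) auto
  moreover have "card ((\<lambda>v. (u, v)) ` V \<union> (\<lambda>v. (v, u)) ` V) = 2 * card V"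
    using V(1) by (subst card_Un_disjoint) (auto simp: V_def card_image inj_on_def)
  moreover have "182 * real (card B) < real n"
    using card_heavy_nodes_le[of n m s] phi unfolding B_def by linarith
  ultimately show ?thesis using V(2) by linarith
qed

lemma inverse_le_card_ratio_pairs:
  assumes "n - 1 \<le> k" "2 \<le> n"
  shows "1 / real n \<le> real k / real (card (pairs n))"
proof -
  have pos: "0 < real n * (real n - 1)" using assms(2) by simp
  have "1 / real n = (real n - 1) / (real n * (real n - 1))" using assms(2) by simp
  also have "\<dots> \<le> real k / (real n * (real n - 1))"
    using assms pos by (intro divide_right_mono) auto
  also have "\<dots> = real k / real (card (pairs n))" using assms(2) by (simp add: card_pairs)
  finally show ?thesis .
qed

context
  fixes n t :: nat and H :: "nat \<Rightarrow> 'tok config" and P :: "nat \<Rightarrow> nat \<times> nat"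
  assumes run: "\<And>k. k < t \<Longrightarrow> P k \<in> pairs n \<and> H (Suc k) = step (H k) (P k)"
begin

lemma wf_config_run:
  assumes "wf_config n (H 0)" "k \<le> t"
  shows "wf_config n (H k)"
  using assms(2)
proof (induction k)
  case (Suc k)
  then show ?case using run[of k] wf_config_step[of n "H k" "P k"] by auto
qed (use assms(1) in simp)

lemma Phi_run_antimono:
  assumes "j \<le> k" "k \<le> t"
  shows "Phi n m (H k) \<le> Phi n m (H j)"
  using assms
proof (induction k rule: dec_induct)
  case (step k)
  then show ?case using run[of k] Phi_step_le[of "P k" n m "H k"] by auto
qed simp

end

theorem lemma3:
  fixes c :: real and n m t :: nat and H :: "nat \<Rightarrow> 'tok config"
    and P :: "nat \<Rightarrow> nat \<times> nat" and b :: 'tok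
  assumes c: "c \<ge> 10"
    and n: "n \<ge> 2"
    and init: "wf_config n (H 0)" "(\<Sum>i<n. length (H 0 i)) = m"
    and run: "\<And>k. k < t \<Longrightarrow> P k \<in> pairs n \<and> H (Suc k) = step (H k) (P k)"
    and T1: "\<exists>s\<le>t. Phi n m (H s) < real n"
    and tok: "\<exists>i<n. b \<in> set (H t i)"
    and high: "real_of_int (nheight n m (H t) b) > 2 * c"
  shows "real (card {p \<in> pairs n.
             real_of_int (nheight n m (step (H t) p) b)
               \<le> 17 / 20 * real_of_int (nheight n m (H t) b)})
           / real (card (pairs n)) \<ge> 1 / real n"
proof -
  have wf: "wf_config n (H t)"
    using wf_config_run[where n = n and t = t and H = H and P = P, OF run init(1)] by simp
  obtain s0 where "s0 \<le> t" "Phi n m (H s0) < real n" using T1 by blast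
  then have phi: "Phi n m (H t) < real n"
    using Phi_run_antimono[where n = n and t = t and H = H and P = P, OF run, of s0 t m] by linarith
  obtain u where u: "u < n" "b \<in> set (H t u)" using tok by blast
  have "21 \<le> nheight n m (H t) b" using high c by linarith
  then have "n - 1 \<le> card {p \<in> pairs n.
      real_of_int (nheight n m (step (H t) p) b) \<le> 17 / 20 * real_of_int (nheight n m (H t) b)}"
    by (rule card_good_pairs_ge[OF wf phi u])
  then show ?thesis using n by (rule inverse_le_card_ratio_pairs)
qed

end
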